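(* Let $(X,d)$ be a complete metric space, $k\ge2$, $0<\rho<1$, and $\nu$ a coordinatewise $\rho$-contractive $(k+1)$-mean on $X$. Then $\nu$ admits exactly one stable reduction; moreover, if $\nu$ is symmetric, this stable reduction is symmetric.
   Context: A $k$-mean is a map $\mu:X^k\to X$ with $\mu(x,\ldots,x)=x$; symmetric means invariant under permutations of arguments. Coordinatewise $\rho$-contractive: $d(\nu(\mathbf{x}),\nu(\mathbf{y}))\le\rho\,d(x_j,y_j)$ whenever $\mathbf{x},\mathbf{y}$ differ only in coordinate $j$. A $k$-mean $\mu$ is a stable reduction of the $(k+1)$-mean $\nu$ if $\nu(x_1,\ldots,x_k,\mu(x_1,\ldots,x_k))=\mu(x_1,\ldots,x_k)$ for all $x_1,\ldots,x_k\in X$. *)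

theory Defs
  imports "HOL-Analysis.Analysis" "HOL-Library.Multiset"
begin

text \<open>Points of X^k are represented as lists of length k; a k-mean is a map
  on lists, only its values on lists of length k matter.\<close>

definition is_mean :: "nat \<Rightarrow> ('a list \<Rightarrow> 'a) \<Rightarrow> bool" where
  "is_mean k \<mu> \<longleftrightarrow> (\<forall>x. \<mu> (replicate k x) = x)"

definition symmetric_mean :: "nat \<Rightarrow> ('a list \<Rightarrow> 'a) \<Rightarrow> bool" where
  "symmetric_mean k \<mu> \<longleftrightarrow>
     (\<forall>xs ys. length xs = k \<longrightarrow> mset ys = mset xs \<longrightarrow> \<mu> ys = \<mu> xs)"

definition coord_contractive :: "nat \<Rightarrow> real \<Rightarrow> ('a::metric_space list \<Rightarrow> 'a) \<Rightarrow> bool" where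
  "coord_contractive k \<rho> \<nu> \<longleftrightarrow>
     (\<forall>xs j y. length xs = k \<longrightarrow> j < k \<longrightarrow>
        dist (\<nu> xs) (\<nu> (xs[j := y])) \<le> \<rho> * dist (xs ! j) y)"

definition stable_reduction :: "nat \<Rightarrow> ('a list \<Rightarrow> 'a) \<Rightarrow> ('a list \<Rightarrow> 'a) \<Rightarrow> bool" where
  "stable_reduction k \<nu> \<mu> \<longleftrightarrow> is_mean k \<mu> \<and>
     (\<forall>xs. length xs = k \<longrightarrow> \<nu> (xs @ [\<mu> xs]) = \<mu> xs)"

end

theory Submission
  imports Defs
begin

text \<open>Freezing the first k arguments of \<nu> leaves a \<rho>-contraction in the last one, so by
  Banach's theorem it has a unique fixed point; a stable reduction must send xs to exactly
  this fixed point. Permuting xs does not change the contraction when \<nu> is symmetric, hence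
  neither its fixed point.\<close>

lemma coord_contractive_last:
  assumes "coord_contractive (Suc k) \<rho> \<nu>" and "length xs = k"
  shows "dist (\<nu> (xs @ [z])) (\<nu> (xs @ [y])) \<le> \<rho> * dist z y"
proof -
  have "dist (\<nu> (xs @ [z])) (\<nu> ((xs @ [z])[k := y])) \<le> \<rho> * dist ((xs @ [z]) ! k) y"
    using assms unfolding coord_contractive_def by (metis length_append_singleton lessI)
  then show ?thesis
    using assms(2) by (simp add: list_update_append nth_append)
qed

lemma coord_contractive_last_fixpoint_unique:
  assumes "coord_contractive (Suc k) \<rho> \<nu>" and "\<rho> < 1" and "length xs = k"
    and "\<nu> (xs @ [z]) = z" and "\<nu> (xs @ [z']) = z'"
  shows "z = z'"
proof -
  have "dist z z' \<le> \<rho> * dist z z'"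
    using coord_contractive_last[OF assms(1,3), of z z'] assms(4,5) by simp
  then have "dist z z' \<le> 0"
    using \<open>\<rho> < 1\<close> zero_le_dist[of z z'] by (smt (verit) mult_le_cancel_right1)
  then show ?thesis
    by simp
qed

lemma coord_contractive_last_fixpoint_exists:
  fixes \<nu> :: "'a::complete_space list \<Rightarrow> 'a"
  assumes "coord_contractive (Suc k) \<rho> \<nu>" and "0 \<le> \<rho>" and "\<rho> < 1" and "length xs = k"
  shows "\<exists>z. \<nu> (xs @ [z]) = z"
  using banach_fix_type[of \<rho> "\<lambda>z. \<nu> (xs @ [z])"] coord_contractive_last[OF assms(1,4)] assms(2,3)
  by blast

definition fixpoint_reduction :: "('a list \<Rightarrow> 'a) \<Rightarrow> 'a list \<Rightarrow> 'a" where
  "fixpoint_reduction \<nu> xs = (THE z. \<nu> (xs @ [z]) = z)"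

lemma stable_reduction_fixpoint_reduction:
  fixes \<nu> :: "'a::complete_space list \<Rightarrow> 'a"
  assumes "is_mean (Suc k) \<nu>" and "coord_contractive (Suc k) \<rho> \<nu>"
    and "0 \<le> \<rho>" and "\<rho> < 1"
  shows "stable_reduction k \<nu> (fixpoint_reduction \<nu>)"
proof -
  have fixpoint: "\<nu> (xs @ [fixpoint_reduction \<nu> xs]) = fixpoint_reduction \<nu> xs"
    if xs: "length xs = k" for xs
  proof -
    obtain z where z: "\<nu> (xs @ [z]) = z"
      using coord_contractive_last_fixpoint_exists[OF assms(2-4) xs] by blast
    then show ?thesis
      unfolding fixpoint_reduction_def
      by (rule theI) (use z coord_contractive_last_fixpoint_unique[OF assms(2,4) xs] in blast)
  qed
  have "\<nu> (replicate k x @ [x]) = x" for x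
    using assms(1) unfolding is_mean_def by (metis replicate_Suc replicate_append_same)
  then have "is_mean k (fixpoint_reduction \<nu>)"
    unfolding is_mean_def
    using fixpoint coord_contractive_last_fixpoint_unique[OF assms(2,4)]
    by (metis length_replicate)
  with fixpoint show ?thesis
    unfolding stable_reduction_def by blast
qed

lemma stable_reduction_unique:
  assumes "coord_contractive (Suc k) \<rho> \<nu>" and "\<rho> < 1"
    and "stable_reduction k \<nu> \<mu>" and "stable_reduction k \<nu> \<mu>'" and "length xs = k"
  shows "\<mu> xs = \<mu>' xs"
  using assms coord_contractive_last_fixpoint_unique unfolding stable_reduction_def by metis

lemma stable_reduction_symmetric:
  assumes "coord_contractive (Suc k) \<rho> \<nu>" and "\<rho> < 1"
    and "symmetric_mean (Suc k) \<nu>" and "stable_reduction k \<nu> \<mu>"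
  shows "symmetric_mean k \<mu>"
  unfolding symmetric_mean_def
proof (intro allI impI)
  fix xs ys :: "'a list"
  assume xs: "length xs = k" and perm: "mset ys = mset xs"
  then have ys: "length ys = k"
    by (metis size_mset)
  have "\<nu> (ys @ [\<mu> xs]) = \<nu> (xs @ [\<mu> xs])"
    using assms(3) xs perm unfolding symmetric_mean_def by simp
  also have "\<dots> = \<mu> xs"
    using assms(4) xs unfolding stable_reduction_def by blast
  finally show "\<mu> ys = \<mu> xs"
    using assms(4) ys coord_contractive_last_fixpoint_unique[OF assms(1,2) ys]
    unfolding stable_reduction_def by metis
qed

theorem proposition8p3:
  fixes \<nu> :: "'a::{metric_space, complete_space} list \<Rightarrow> 'a"
    and k :: nat and \<rho> :: real
  assumes "k \<ge> 2" and "0 < \<rho>" and "\<rho> < 1"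
    and "is_mean (Suc k) \<nu>"
    and "coord_contractive (Suc k) \<rho> \<nu>"
  shows "(\<exists>\<mu>. stable_reduction k \<nu> \<mu> \<and>
            (\<forall>\<mu>'. stable_reduction k \<nu> \<mu>' \<longrightarrow>
                 (\<forall>xs. length xs = k \<longrightarrow> \<mu>' xs = \<mu> xs)))
         \<and> (symmetric_mean (Suc k) \<nu> \<longrightarrow>
            (\<forall>\<mu>. stable_reduction k \<nu> \<mu> \<longrightarrow> symmetric_mean k \<mu>))"
proof -
  have "stable_reduction k \<nu> (fixpoint_reduction \<nu>)"
    using stable_reduction_fixpoint_reduction[OF assms(4,5) less_imp_le assms(3)] assms(2) .
  moreover have "\<mu>' xs = fixpoint_reduction \<nu> xs"
    if "stable_reduction k \<nu> \<mu>'" and "length xs = k" for \<mu>' xs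
    using stable_reduction_unique[OF assms(5,3) that(1) calculation that(2)] .
  moreover have "symmetric_mean k \<mu>"
    if "symmetric_mean (Suc k) \<nu>" and "stable_reduction k \<nu> \<mu>" for \<mu>
    using stable_reduction_symmetric[OF assms(5,3) that] .
  ultimately show ?thesis
    by blast
qed

end
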